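(* Let $\mathcal{X}$ be a finite-dimensional Hilbert space, $\sigma\in\mathcal{D}(\mathcal{X})$, $\Phi$ a quantum channel on $\mathcal{L}(\mathcal{X})$ with Kraus operators $\{A_i\}_i$, $H$ a Hermitian operator on $\mathcal{X}$, $\epsilon\in\mathbb{R}$, $U_\epsilon=\exp(-i\epsilon H)$, and $\Psi(\rho)=U_\epsilon\Phi(\rho)U_\epsilon^\dagger$. Then $$G_{\mathrm{ch}}(\Phi,\Psi;\sigma)=1+\sum_{i,j}\left|\operatorname{Tr}(\sigma A_i^\dagger U_\epsilon A_j)\right|^2-\sum_{i,j}\left|\operatorname{Tr}(\sigma A_i^\dagger A_j)\right|^2.$$
   Context: $\mathcal{D}(\mathcal{X})$ is the set of density operators on $\mathcal{X}$. Superfidelity: $G(\rho_1,\rho_2)=\operatorname{Tr}(\rho_1\rho_2)+\sqrt{1-\operatorname{Tr}\rho_1^2}\sqrt{1-\operatorname{Tr}\rho_2^2}$. Channel superfidelity: $G_{\mathrm{ch}}(\Phi,\Psi;\sigma)=\inf G\big((\Phi\otimes\mathbb{1}_{\mathcal{L}(\mathcal{Z})})(\xi),(\Psi\otimes\mathbb{1}_{\mathcal{L}(\mathcal{Z})})(\xi)\big)$ over all finite-dimensional $\mathcal{Z}$ and all pure states $\xi$ on $\mathcal{X}\otimes\mathcal{Z}$ with $\operatorname{Tr}_{\mathcal{Z}}\xi=\sigma$. *)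

theory Defs
  imports "HOL-Analysis.Analysis" "Jordan_Normal_Form.Matrix"
begin

definition adj :: "complex mat \<Rightarrow> complex mat" where
  "adj A = mat (dim_col A) (dim_row A) (\<lambda>(i,j). cnj (A $$ (j,i)))"

definition mtrace :: "complex mat \<Rightarrow> complex" where
  "mtrace A = (\<Sum>i<dim_row A. A $$ (i,i))"

definition hermitian :: "nat \<Rightarrow> complex mat \<Rightarrow> bool" where
  "hermitian n A \<longleftrightarrow> A \<in> carrier_mat n n \<and> adj A = A"

definition psd :: "nat \<Rightarrow> complex mat \<Rightarrow> bool" where
  "psd n A \<longleftrightarrow> hermitian n A \<and>
     (\<forall>v. v \<in> carrier_vec n \<longrightarrow> 0 \<le> Re (\<Sum>i<n. \<Sum>j<n. cnj (v $ i) * A $$ (i,j) * v $ j))"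

definition density :: "nat \<Rightarrow> complex mat \<Rightarrow> bool" where
  "density n \<rho> \<longleftrightarrow> psd n \<rho> \<and> mtrace \<rho> = 1"

definition pure_state :: "nat \<Rightarrow> complex mat \<Rightarrow> bool" where
  "pure_state d \<xi> \<longleftrightarrow> (\<exists>v. v \<in> carrier_vec d \<and> (\<Sum>i<d. (cmod (v $ i))\<^sup>2) = 1 \<and>
       \<xi> = mat d d (\<lambda>(i,j). v $ i * cnj (v $ j)))"

text \<open>Identification X (x) Z with C^(n*m): basis vector e_i (x) f_k has index i*m+k.\<close>
definition ptrace_Z :: "nat \<Rightarrow> nat \<Rightarrow> complex mat \<Rightarrow> complex mat" where
  "ptrace_Z n m \<rho> = mat n n (\<lambda>(i,j). \<Sum>k<m. \<rho> $$ (i*m+k, j*m+k))"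

text \<open>(Phi (x) id_{L(Z)})(xi) for a (linear) map Phi on n x n matrices, defined blockwise:
  ((Phi (x) id)(xi))_{(i,k),(j,l)} = Phi(xi_{k,l})_{i,j}, where (xi_{k,l})_{i,j} = xi_{(i,k),(j,l)}.\<close>
definition tensor_id :: "nat \<Rightarrow> nat \<Rightarrow> (complex mat \<Rightarrow> complex mat) \<Rightarrow> complex mat \<Rightarrow> complex mat" where
  "tensor_id n m \<Phi> \<xi> = mat (n*m) (n*m) (\<lambda>(p,q).
      \<Phi> (mat n n (\<lambda>(i,j). \<xi> $$ (i*m + p mod m, j*m + q mod m))) $$ (p div m, q div m))"

definition kraus_apply :: "complex mat list \<Rightarrow> complex mat \<Rightarrow> complex mat" where
  "kraus_apply As \<rho> = mat (dim_row \<rho>) (dim_col \<rho>)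
      (\<lambda>(i,j). \<Sum>k<length As. (As!k * \<rho> * adj (As!k)) $$ (i,j))"

definition kraus_channel :: "nat \<Rightarrow> complex mat list \<Rightarrow> bool" where
  "kraus_channel n As \<longleftrightarrow> (\<forall>A\<in>set As. A \<in> carrier_mat n n) \<and>
     mat n n (\<lambda>(i,j). \<Sum>k<length As. (adj (As!k) * As!k) $$ (i,j)) = 1\<^sub>m n"

definition superfidelity :: "complex mat \<Rightarrow> complex mat \<Rightarrow> real" where
  "superfidelity \<rho>1 \<rho>2 = Re (mtrace (\<rho>1 * \<rho>2))
     + sqrt (1 - Re (mtrace (\<rho>1 * \<rho>1))) * sqrt (1 - Re (mtrace (\<rho>2 * \<rho>2)))"

definition channel_superfidelity ::
  "nat \<Rightarrow> (complex mat \<Rightarrow> complex mat) \<Rightarrow> (complex mat \<Rightarrow> complex mat) \<Rightarrow> complex mat \<Rightarrow> real" where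
  "channel_superfidelity n \<Phi> \<Psi> \<sigma> = Inf {superfidelity (tensor_id n m \<Phi> \<xi>) (tensor_id n m \<Psi> \<xi>) | m \<xi>.
       0 < m \<and> pure_state (n*m) \<xi> \<and> ptrace_Z n m \<xi> = \<sigma>}"

definition mat_exp :: "complex mat \<Rightarrow> complex mat" where
  "mat_exp A = mat (dim_row A) (dim_col A) (\<lambda>(i,j). \<Sum>k. (A ^\<^sub>m k) $$ (i,j) / of_nat (fact k))"

end

theory Submission
  imports Defs
begin

text \<open>
  Write a purification of \<sigma> as \<xi> = |v><v| with v in X \<otimes> Z. Then (\<Phi> \<otimes> id)(\<xi>) is the sum
  of the rank-one operators |w_t><w_t| with w_t = (A_t \<otimes> 1) v, and (\<Psi> \<otimes> id)(\<xi>) is the same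
  sum for the vectors (U \<otimes> 1) w_t. Hence Tr(\<rho>1 \<rho>2) is the sum of the squares
  |<w_t, (U \<otimes> 1) w_s>|^2 = |Tr(\<sigma> A_t^* U A_s)|^2, and Tr(\<rho>1^2) is the same sum without U.
  Since U = exp(-i \<epsilon> H) is unitary, Tr(\<rho>2^2) = Tr(\<rho>1^2) \<le> 1, so the two square roots in the
  superfidelity multiply to 1 - Tr(\<rho>1^2). The superfidelity is therefore the same for every
  purification, and the infimum is attained because purifications exist: a Cholesky
  factorisation \<sigma> = V V^* gives one.
\<close>

section \<open>The exponential of a Hermitian matrix\<close>

lemma index_mult_mat_sum:
  assumes "A \<in> carrier_mat n k" "B \<in> carrier_mat k m" "i < n" "j < m"
  shows "(A * B) $$ (i,j) = (\<Sum>l<k. A $$ (i,l) * B $$ (l,j))"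
  using assms by (auto simp: scalar_prod_def lessThan_atLeast0 intro!: sum.cong)

lemma mtrace_mult:
  assumes "A \<in> carrier_mat n n" "B \<in> carrier_mat n n"
  shows "mtrace (A * B) = (\<Sum>i<n. \<Sum>j<n. A $$ (i,j) * B $$ (j,i))"
  unfolding mtrace_def using assms by (auto simp: scalar_prod_def lessThan_atLeast0 intro!: sum.cong)

lemma pow_mat_add:
  assumes H: "H \<in> carrier_mat n n"
  shows "H ^\<^sub>m a * H ^\<^sub>m b = H ^\<^sub>m (a + b)"
proof (induction b)
  case (Suc b)
  have "H ^\<^sub>m a * H ^\<^sub>m Suc b = (H ^\<^sub>m a * H ^\<^sub>m b) * H"
    using H by (simp add: assoc_mult_mat[of _ n n _ n _ n])
  then show ?case using Suc by simp
qed (use H in simp)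

definition entry_norm_sum :: "nat \<Rightarrow> complex mat \<Rightarrow> real" where
  "entry_norm_sum n H = (\<Sum>i<n. \<Sum>j<n. cmod (H $$ (i,j)))"

lemma norm_index_pow_mat_le:
  assumes H: "H \<in> carrier_mat n n" and "i < n" "j < n"
  shows "cmod ((H ^\<^sub>m k) $$ (i,j)) \<le> entry_norm_sum n H ^ k"
  using assms(2,3)
proof (induction k arbitrary: i j)
  case 0
  then show ?case using H by auto
next
  case (Suc k)
  let ?S = "entry_norm_sum n H"
  have "(H ^\<^sub>m Suc k) $$ (i,j) = (\<Sum>l<n. (H ^\<^sub>m k) $$ (i,l) * H $$ (l,j))"
    using H Suc by (subst pow_mat.simps(2), subst index_mult_mat_sum[of _ n n _ n]) auto
  then have "cmod ((H ^\<^sub>m Suc k) $$ (i,j)) \<le> (\<Sum>l<n. cmod ((H ^\<^sub>m k) $$ (i,l)) * cmod (H $$ (l,j)))"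
    by (metis (no_types, lifting) norm_mult norm_sum sum.cong)
  also have "\<dots> \<le> (\<Sum>l<n. ?S ^ k * cmod (H $$ (l,j)))"
    by (intro sum_mono mult_right_mono Suc) auto
  also have "\<dots> = ?S ^ k * (\<Sum>l<n. cmod (H $$ (l,j)))"
    by (simp add: sum_distrib_left)
  also have "\<dots> \<le> ?S ^ k * ?S"
    unfolding entry_norm_sum_def using Suc
    by (intro mult_left_mono sum_mono member_le_sum zero_le_power sum_nonneg) auto
  finally show ?case by (simp add: mult.commute)
qed

lemma summable_norm_exp_series_index:
  fixes c :: complex
  assumes H: "H \<in> carrier_mat n n" and "i < n" "j < n"
  shows "summable (\<lambda>k. norm (c ^ k * (H ^\<^sub>m k) $$ (i,j) / fact k))"
proof (rule summable_comparison_test)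
  let ?x = "cmod c * entry_norm_sum n H"
  show "summable (\<lambda>k. ?x ^ k /\<^sub>R fact k)"
    using exp_converges summable_def by blast
  show "\<exists>N. \<forall>k\<ge>N. norm (norm (c ^ k * (H ^\<^sub>m k) $$ (i,j) / fact k)) \<le> ?x ^ k /\<^sub>R fact k"
  proof (intro exI allI impI)
    fix k :: nat
    have "norm (norm (c ^ k * (H ^\<^sub>m k) $$ (i,j) / fact k))
        = cmod c ^ k * cmod ((H ^\<^sub>m k) $$ (i,j)) / fact k"
      by (simp add: norm_mult norm_divide norm_power)
    also have "\<dots> \<le> cmod c ^ k * entry_norm_sum n H ^ k / fact k"
      by (intro divide_right_mono mult_left_mono norm_index_pow_mat_le[OF assms]) auto
    finally show "norm (norm (c ^ k * (H ^\<^sub>m k) $$ (i,j) / fact k)) \<le> ?x ^ k /\<^sub>R fact k"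
      by (simp add: power_mult_distrib divide_inverse mult_ac)
  qed
qed

lemma index_pow_mat_smult:
  fixes c :: complex
  assumes H: "H \<in> carrier_mat n n" and "i < n" "j < n"
  shows "((c \<cdot>\<^sub>m H) ^\<^sub>m k) $$ (i,j) = c ^ k * (H ^\<^sub>m k) $$ (i,j)"
  using assms(2,3)
proof (induction k arbitrary: i j)
  case 0
  then show ?case using H by auto
next
  case (Suc k)
  have cH: "c \<cdot>\<^sub>m H \<in> carrier_mat n n" using H by auto
  have "((c \<cdot>\<^sub>m H) ^\<^sub>m Suc k) $$ (i,j) = (\<Sum>l<n. ((c \<cdot>\<^sub>m H) ^\<^sub>m k) $$ (i,l) * (c \<cdot>\<^sub>m H) $$ (l,j))"
    using cH Suc by (subst pow_mat.simps(2), subst index_mult_mat_sum[of _ n n _ n]) auto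
  also have "\<dots> = c ^ Suc k * (\<Sum>l<n. (H ^\<^sub>m k) $$ (i,l) * H $$ (l,j))"
    using Suc H by (auto simp: sum_distrib_left mult_ac intro!: sum.cong)
  also have "(\<Sum>l<n. (H ^\<^sub>m k) $$ (i,l) * H $$ (l,j)) = (H ^\<^sub>m Suc k) $$ (i,j)"
    using H Suc by (subst pow_mat.simps(2), subst index_mult_mat_sum[of _ n n _ n]) auto
  finally show ?case .
qed

lemma mat_exp_smult_carrier: "H \<in> carrier_mat n n \<Longrightarrow> mat_exp (c \<cdot>\<^sub>m H) \<in> carrier_mat n n"
  by (simp add: mat_exp_def)

lemma index_mat_exp_smult:
  assumes "H \<in> carrier_mat n n" "i < n" "j < n"
  shows "mat_exp (c \<cdot>\<^sub>m H) $$ (i,j) = (\<Sum>k. c ^ k * (H ^\<^sub>m k) $$ (i,j) / fact k)"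
  using assms by (simp add: mat_exp_def index_pow_mat_smult)

text \<open>The binomial theorem for the commuting matrices c H and d H.\<close>

lemma exp_series_Cauchy_coeff:
  fixes c d :: complex
  assumes H: "H \<in> carrier_mat n n" and i: "i < n" and l: "l < n"
  shows "(\<Sum>j<n. \<Sum>k\<le>p. c ^ k * (H ^\<^sub>m k) $$ (i,j) / fact k * (d ^ (p - k) * (H ^\<^sub>m (p - k)) $$ (j,l) / fact (p - k)))
       = (c + d) ^ p * (H ^\<^sub>m p) $$ (i,l) / fact p"
proof -
  have "(\<Sum>j<n. \<Sum>k\<le>p. c ^ k * (H ^\<^sub>m k) $$ (i,j) / fact k * (d ^ (p - k) * (H ^\<^sub>m (p - k)) $$ (j,l) / fact (p - k)))
      = (\<Sum>k\<le>p. c ^ k * d ^ (p - k) / (fact k * fact (p - k))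
           * (\<Sum>j<n. (H ^\<^sub>m k) $$ (i,j) * (H ^\<^sub>m (p - k)) $$ (j,l)))"
    unfolding sum_distrib_left by (subst sum.swap) (intro sum.cong refl, simp)
  also have "\<dots> = (\<Sum>k\<le>p. c ^ k * d ^ (p - k) / (fact k * fact (p - k)) * (H ^\<^sub>m p) $$ (i,l))"
  proof (intro sum.cong refl arg_cong[where f = "\<lambda>x. _ * x"])
    fix k assume "k \<in> {..p}"
    then show "(\<Sum>j<n. (H ^\<^sub>m k) $$ (i,j) * (H ^\<^sub>m (p - k)) $$ (j,l)) = (H ^\<^sub>m p) $$ (i,l)"
      using H i l by (subst index_mult_mat_sum[of _ n n _ n, symmetric]) (auto simp: pow_mat_add)
  qed
  also have "\<dots> = (\<Sum>k\<le>p. of_nat (p choose k) * c ^ k * d ^ (p - k)) * (H ^\<^sub>m p) $$ (i,l) / fact p"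
    by (auto simp: sum_distrib_right sum_divide_distrib binomial_fact intro!: sum.cong)
  also have "\<dots> = (c + d) ^ p * (H ^\<^sub>m p) $$ (i,l) / fact p"
    by (simp add: binomial_ring)
  finally show ?thesis .
qed

lemma mat_exp_smult_add:
  assumes H: "H \<in> carrier_mat n n"
  shows "mat_exp (c \<cdot>\<^sub>m H) * mat_exp (d \<cdot>\<^sub>m H) = mat_exp ((c + d) \<cdot>\<^sub>m H)"
proof (rule eq_matI)
  fix i l assume "i < dim_row (mat_exp ((c + d) \<cdot>\<^sub>m H))" "l < dim_col (mat_exp ((c + d) \<cdot>\<^sub>m H))"
  then have i: "i < n" and l: "l < n" using H by (auto simp: mat_exp_def)
  define a where "a j k = c ^ k * (H ^\<^sub>m k) $$ (i,j) / fact k" for j k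
  define b where "b j k = d ^ k * (H ^\<^sub>m k) $$ (j,l) / fact k" for j k
  have sa: "summable (\<lambda>k. norm (a j k))" if "j < n" for j
    unfolding a_def using summable_norm_exp_series_index[OF H i that] .
  have sb: "summable (\<lambda>k. norm (b j k))" if "j < n" for j
    unfolding b_def using summable_norm_exp_series_index[OF H that l] .
  have "(mat_exp (c \<cdot>\<^sub>m H) * mat_exp (d \<cdot>\<^sub>m H)) $$ (i,l) = (\<Sum>j<n. (\<Sum>k. a j k) * (\<Sum>k. b j k))"
    using H i l unfolding a_def b_def
    by (subst index_mult_mat_sum[of _ n n _ n]) (auto simp: mat_exp_smult_carrier index_mat_exp_smult)
  also have "\<dots> = (\<Sum>j<n. \<Sum>p. \<Sum>k\<le>p. a j k * b j (p - k))"
    by (intro sum.cong refl Cauchy_product sa sb) auto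
  also have "\<dots> = (\<Sum>p. \<Sum>j<n. \<Sum>k\<le>p. a j k * b j (p - k))"
    by (rule suminf_sum[symmetric]) (intro summable_Cauchy_product sa sb, auto)
  also have "\<dots> = (\<Sum>p. (c + d) ^ p * (H ^\<^sub>m p) $$ (i,l) / fact p)"
    unfolding a_def b_def exp_series_Cauchy_coeff[OF H i l] ..
  also have "\<dots> = mat_exp ((c + d) \<cdot>\<^sub>m H) $$ (i,l)"
    using H i l by (simp add: index_mat_exp_smult)
  finally show "(mat_exp (c \<cdot>\<^sub>m H) * mat_exp (d \<cdot>\<^sub>m H)) $$ (i,l) = mat_exp ((c + d) \<cdot>\<^sub>m H) $$ (i,l)" .
qed (use H in \<open>auto simp: mat_exp_def\<close>)

lemma mat_exp_smult_zero:
  assumes H: "H \<in> carrier_mat n n"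
  shows "mat_exp (0 \<cdot>\<^sub>m H) = 1\<^sub>m n"
proof (rule eq_matI)
  fix i j assume "i < dim_row (1\<^sub>m n)" "j < dim_col (1\<^sub>m n)"
  then have ij: "i < n" "j < n" by auto
  have "(\<lambda>k. (0::complex) ^ k * (H ^\<^sub>m k) $$ (i,j) / fact k) sums (H ^\<^sub>m 0) $$ (i,j)"
    by (rule sums_single[of 0 "\<lambda>_. (H ^\<^sub>m 0) $$ (i,j)", THEN sums_cong[THEN iffD1, rotated]]) auto
  then show "mat_exp (0 \<cdot>\<^sub>m H) $$ (i,j) = 1\<^sub>m n $$ (i,j)"
    using H ij by (simp add: index_mat_exp_smult sums_iff)
qed (use H in \<open>auto simp: mat_exp_def\<close>)

lemma cnj_suminf: "summable f \<Longrightarrow> cnj (suminf f) = (\<Sum>k. cnj (f k))"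
  by (metis summable_sums sums_cnj sums_unique)

lemma hermitian_index_pow_mat:
  assumes h: "hermitian n H" and "i < n" "j < n"
  shows "cnj ((H ^\<^sub>m k) $$ (j,i)) = (H ^\<^sub>m k) $$ (i,j)"
  using assms(2,3)
proof (induction k arbitrary: i j)
  case 0
  then show ?case using h by (auto simp: hermitian_def)
next
  case (Suc k)
  have H: "H \<in> carrier_mat n n" and aH: "adj H = H" using h by (auto simp: hermitian_def)
  have H_cnj: "cnj (H $$ (j,i)) = H $$ (i,j)" if "i < n" "j < n" for i j
    using arg_cong[OF aH, of "\<lambda>M. M $$ (i,j)"] H that by (simp add: adj_def)
  have "cnj ((H ^\<^sub>m Suc k) $$ (j,i)) = cnj (\<Sum>l<n. (H ^\<^sub>m k) $$ (j,l) * H $$ (l,i))"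
    using H Suc by (subst pow_mat.simps(2), subst index_mult_mat_sum[of _ n n _ n]) auto
  also have "\<dots> = (\<Sum>l<n. H $$ (i,l) * (H ^\<^sub>m k) $$ (l,j))"
    using Suc H_cnj by (auto simp: mult.commute intro!: sum.cong)
  also have "\<dots> = (H * H ^\<^sub>m k) $$ (i,j)"
    using H Suc by (subst index_mult_mat_sum[of _ n n _ n]) auto
  also have "H * H ^\<^sub>m k = H ^\<^sub>m Suc k"
    using pow_mat_add[OF H, of 1 k] H by simp
  finally show ?case .
qed

lemma adj_mat_exp_smult:
  assumes h: "hermitian n H"
  shows "adj (mat_exp (c \<cdot>\<^sub>m H)) = mat_exp (cnj c \<cdot>\<^sub>m H)"
proof (rule eq_matI)
  have H: "H \<in> carrier_mat n n" using h by (simp add: hermitian_def)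
  then show dims: "dim_row (adj (mat_exp (c \<cdot>\<^sub>m H))) = dim_row (mat_exp (cnj c \<cdot>\<^sub>m H))"
    "dim_col (adj (mat_exp (c \<cdot>\<^sub>m H))) = dim_col (mat_exp (cnj c \<cdot>\<^sub>m H))"
    by (simp_all add: adj_def mat_exp_def)
  fix i j assume "i < dim_row (mat_exp (cnj c \<cdot>\<^sub>m H))" "j < dim_col (mat_exp (cnj c \<cdot>\<^sub>m H))"
  then have ij: "i < n" "j < n" using H by (auto simp: mat_exp_def)
  have sm: "summable (\<lambda>k. c ^ k * (H ^\<^sub>m k) $$ (j,i) / fact k)"
    by (rule summable_norm_cancel[OF summable_norm_exp_series_index[OF H ij(2) ij(1)]])
  have "adj (mat_exp (c \<cdot>\<^sub>m H)) $$ (i,j) = cnj (\<Sum>k. c ^ k * (H ^\<^sub>m k) $$ (j,i) / fact k)"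
    using H ij mat_exp_smult_carrier[OF H, of c] by (simp add: adj_def index_mat_exp_smult)
  also have "\<dots> = (\<Sum>k. cnj c ^ k * (H ^\<^sub>m k) $$ (i,j) / fact k)"
    using hermitian_index_pow_mat[OF h ij] by (simp add: cnj_suminf[OF sm])
  also have "\<dots> = mat_exp (cnj c \<cdot>\<^sub>m H) $$ (i,j)"
    using H ij by (simp add: index_mat_exp_smult)
  finally show "adj (mat_exp (c \<cdot>\<^sub>m H)) $$ (i,j) = mat_exp (cnj c \<cdot>\<^sub>m H) $$ (i,j)" .
qed

lemma unitary_mat_exp_smult:
  assumes h: "hermitian n H" and c: "cnj c = - c"
  shows "adj (mat_exp (c \<cdot>\<^sub>m H)) * mat_exp (c \<cdot>\<^sub>m H) = 1\<^sub>m n"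
proof -
  have H: "H \<in> carrier_mat n n" using h by (simp add: hermitian_def)
  show ?thesis
    unfolding adj_mat_exp_smult[OF h] c mat_exp_smult_add[OF H] using mat_exp_smult_zero[OF H] by simp
qed

section \<open>Vectors on X \<otimes> Z\<close>

text \<open>Vectors of C^(n*m) are represented as functions on indices; as in ptrace_Z, the basis vector
  e_i \<otimes> f_k has index i*m+k, and tensor_id_vec n m M v = (M \<otimes> 1) v.\<close>

definition cinner :: "nat \<Rightarrow> (nat \<Rightarrow> complex) \<Rightarrow> (nat \<Rightarrow> complex) \<Rightarrow> complex" where
  "cinner N x y = (\<Sum>p<N. cnj (x p) * y p)"

definition tensor_id_vec :: "nat \<Rightarrow> nat \<Rightarrow> complex mat \<Rightarrow> (nat \<Rightarrow> complex) \<Rightarrow> nat \<Rightarrow> complex" where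
  "tensor_id_vec n m M v = (\<lambda>p. \<Sum>a<n. M $$ (p div m, a) * v (a*m + p mod m))"

lemma tensor_index_less:
  fixes a k n m :: nat
  assumes "a < n" "k < m"
  shows "a*m + k < n*m"
proof -
  have "a*m + k < Suc a * m" using assms by simp
  also have "\<dots> \<le> n * m" using assms by (intro mult_le_mono1) simp
  finally show ?thesis .
qed

lemma sum_lessThan_mult:
  fixes n m :: nat
  shows "(\<Sum>p<n*m. f p) = (\<Sum>i<n. \<Sum>k<m. f (i*m + k))"
proof (induction n)
  case (Suc n)
  have split: "(\<Sum>p<a + b. f p) = (\<Sum>p<a. f p) + (\<Sum>k<b. f (a + k))" for a b :: nat
    by (induction b) (auto simp: add.assoc)
  show ?case using Suc split[of "n*m" m] by (simp add: add.commute)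
qed simp

lemma cinner_cong:
  "(\<And>p. p < N \<Longrightarrow> x p = x' p) \<Longrightarrow> (\<And>p. p < N \<Longrightarrow> y p = y' p) \<Longrightarrow> cinner N x y = cinner N x' y'"
  unfolding cinner_def by auto

lemma cinner_sum_right: "cinner N x (\<lambda>p. \<Sum>t\<in>T. f t p) = (\<Sum>t\<in>T. cinner N x (f t))"
  unfolding cinner_def by (simp add: sum_distrib_left sum.swap[of _ T])

lemma Re_cinner_self: "Re (cinner N x x) = (\<Sum>p<N. (cmod (x p))\<^sup>2)"
proof -
  have "cinner N x x = (\<Sum>p<N. complex_of_real ((cmod (x p))\<^sup>2))"
    unfolding cinner_def by (metis complex_norm_square mult.commute)
  then show ?thesis by (simp add: Re_sum)
qed

lemma cinner_Cauchy_Schwarz: "(cmod (cinner N x y))\<^sup>2 \<le> Re (cinner N x x) * Re (cinner N y y)"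
proof -
  have "cmod (cinner N x y) \<le> (\<Sum>p<N. cmod (x p) * cmod (y p))"
    unfolding cinner_def by (rule order_trans[OF norm_sum]) (simp add: norm_mult)
  then have "(cmod (cinner N x y))\<^sup>2 \<le> (\<Sum>p<N. cmod (x p) * cmod (y p))\<^sup>2"
    by (intro power_mono) auto
  also have "\<dots> \<le> (\<Sum>p<N. (cmod (x p))\<^sup>2) * (\<Sum>p<N. (cmod (y p))\<^sup>2)"
    by (rule Cauchy_Schwarz_ineq_sum)
  finally show ?thesis by (simp add: Re_cinner_self)
qed

lemma sum_cmod_cinner_sq_le:
  "(\<Sum>t<L. \<Sum>s<L. (cmod (cinner N (X t) (X s)))\<^sup>2) \<le> (\<Sum>t<L. Re (cinner N (X t) (X t)))\<^sup>2"
proof -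
  have "(\<Sum>t<L. \<Sum>s<L. (cmod (cinner N (X t) (X s)))\<^sup>2)
      \<le> (\<Sum>t<L. \<Sum>s<L. Re (cinner N (X t) (X t)) * Re (cinner N (X s) (X s)))"
    by (intro sum_mono cinner_Cauchy_Schwarz)
  also have "\<dots> = (\<Sum>t<L. Re (cinner N (X t) (X t)))\<^sup>2"
    by (simp add: power2_eq_square sum_product)
  finally show ?thesis .
qed

lemma tensor_id_vec_mult:
  assumes M: "M \<in> carrier_mat n n" and N: "N \<in> carrier_mat n n" and p: "p < n*m"
  shows "tensor_id_vec n m M (tensor_id_vec n m N v) p = tensor_id_vec n m (M * N) v p"
proof -
  have m: "0 < m" using p by (cases m) auto
  have i: "p div m < n" using p by (simp add: less_mult_imp_div_less)
  have "tensor_id_vec n m M (tensor_id_vec n m N v) p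
      = (\<Sum>b<n. \<Sum>a<n. M $$ (p div m, b) * N $$ (b, a) * v (a*m + p mod m))"
    using m by (simp add: tensor_id_vec_def sum_distrib_left mult.assoc)
  also have "\<dots> = (\<Sum>a<n. (\<Sum>b<n. M $$ (p div m, b) * N $$ (b, a)) * v (a*m + p mod m))"
    by (subst sum.swap) (simp add: sum_distrib_right)
  also have "\<dots> = tensor_id_vec n m (M * N) v p"
    unfolding tensor_id_vec_def using i M N by (intro sum.cong refl) (subst index_mult_mat_sum[of _ n n _ n], auto)
  finally show ?thesis .
qed

lemma tensor_id_vec_one:
  assumes p: "p < n*m"
  shows "tensor_id_vec n m (1\<^sub>m n) v p = v p"
proof -
  have i: "p div m < n" using p by (simp add: less_mult_imp_div_less)
  have "tensor_id_vec n m (1\<^sub>m n) v p = (\<Sum>a<n. if p div m = a then v (a*m + p mod m) else 0)"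
    unfolding tensor_id_vec_def using i by (intro sum.cong) auto
  then show ?thesis using i by simp
qed

lemma cinner_tensor_id_vec_adj:
  assumes M: "M \<in> carrier_mat n n"
  shows "cinner (n*m) (tensor_id_vec n m M x) y = cinner (n*m) x (tensor_id_vec n m (adj M) y)"
proof -
  have "cinner (n*m) (tensor_id_vec n m M x) y
      = (\<Sum>i<n. \<Sum>k<m. \<Sum>a<n. cnj (M $$ (i,a)) * cnj (x (a*m+k)) * y (i*m+k))"
    unfolding cinner_def tensor_id_vec_def
    by (subst sum_lessThan_mult) (simp add: sum_distrib_right mult.assoc)
  also have "\<dots> = (\<Sum>a<n. \<Sum>k<m. \<Sum>i<n. cnj (M $$ (i,a)) * cnj (x (a*m+k)) * y (i*m+k))"
    by (subst sum.swap, subst (2) sum.swap, subst sum.swap) simp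
  also have "\<dots> = cinner (n*m) x (tensor_id_vec n m (adj M) y)"
    unfolding cinner_def tensor_id_vec_def using M
    by (subst sum_lessThan_mult) (auto simp: sum_distrib_left adj_def mult_ac intro!: sum.cong)
  finally show ?thesis .
qed

lemma cinner_tensor_id_vec_unitary:
  assumes U: "U \<in> carrier_mat n n" and UU: "adj U * U = 1\<^sub>m n"
  shows "cinner (n*m) (tensor_id_vec n m U x) (tensor_id_vec n m U y) = cinner (n*m) x y"
proof -
  have aU: "adj U \<in> carrier_mat n n" using U by (auto simp: adj_def)
  have "cinner (n*m) (tensor_id_vec n m U x) (tensor_id_vec n m U y)
      = cinner (n*m) x (tensor_id_vec n m (adj U) (tensor_id_vec n m U y))"
    by (rule cinner_tensor_id_vec_adj[OF U])
  also have "\<dots> = cinner (n*m) x y"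
    by (rule cinner_cong) (auto simp: tensor_id_vec_mult[OF aU U] UU tensor_id_vec_one)
  finally show ?thesis .
qed

lemma cinner_tensor_id_vec_ptrace:
  assumes M: "M \<in> carrier_mat n n"
  shows "cinner (n*m) v (tensor_id_vec n m M v)
       = mtrace (ptrace_Z n m (mat (n*m) (n*m) (\<lambda>(i,j). v i * cnj (v j))) * M)"
proof -
  let ?s = "ptrace_Z n m (mat (n*m) (n*m) (\<lambda>(i,j). v i * cnj (v j)))"
  have s: "?s \<in> carrier_mat n n" by (simp add: ptrace_Z_def)
  have "mtrace (?s * M) = (\<Sum>a<n. \<Sum>i<n. ?s $$ (a,i) * M $$ (i,a))"
    by (rule mtrace_mult[OF s M])
  also have "\<dots> = (\<Sum>a<n. \<Sum>i<n. \<Sum>k<m. v (a*m+k) * cnj (v (i*m+k)) * M $$ (i,a))"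
    by (intro sum.cong refl) (simp add: ptrace_Z_def tensor_index_less sum_distrib_right)
  also have "\<dots> = (\<Sum>i<n. \<Sum>k<m. \<Sum>a<n. v (a*m+k) * cnj (v (i*m+k)) * M $$ (i,a))"
    by (subst sum.swap, subst (2) sum.swap) simp
  also have "\<dots> = cinner (n*m) v (tensor_id_vec n m M v)"
    unfolding cinner_def tensor_id_vec_def
    by (subst sum_lessThan_mult) (auto simp: sum_distrib_left mult_ac intro!: sum.cong)
  finally show ?thesis by simp
qed

lemma cinner_tensor_id_vec_trace:
  assumes A: "A \<in> carrier_mat n n" and B: "B \<in> carrier_mat n n"
    and \<sigma>: "\<sigma> = ptrace_Z n m (mat (n*m) (n*m) (\<lambda>(i,j). v i * cnj (v j)))"
  shows "cinner (n*m) (tensor_id_vec n m A v) (tensor_id_vec n m B v) = mtrace (\<sigma> * adj A * B)"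
proof -
  have aA: "adj A \<in> carrier_mat n n" using A by (auto simp: adj_def)
  have s: "\<sigma> \<in> carrier_mat n n" unfolding \<sigma> by (simp add: ptrace_Z_def)
  have "cinner (n*m) (tensor_id_vec n m A v) (tensor_id_vec n m B v)
      = cinner (n*m) v (tensor_id_vec n m (adj A) (tensor_id_vec n m B v))"
    by (rule cinner_tensor_id_vec_adj[OF A])
  also have "\<dots> = cinner (n*m) v (tensor_id_vec n m (adj A * B) v)"
    by (rule cinner_cong) (auto simp: tensor_id_vec_mult[OF aA B])
  also have "\<dots> = mtrace (\<sigma> * (adj A * B))"
    unfolding \<sigma> using aA B by (intro cinner_tensor_id_vec_ptrace) auto
  also have "\<sigma> * (adj A * B) = \<sigma> * adj A * B"
    using s aA B by (simp add: assoc_mult_mat[of _ n n _ n _ n])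
  finally show ?thesis .
qed

lemma cinner_tensor_id_vec_conj_trace:
  assumes A: "A \<in> carrier_mat n n" and B: "B \<in> carrier_mat n n" and U: "U \<in> carrier_mat n n"
    and \<sigma>: "\<sigma> = ptrace_Z n m (mat (n*m) (n*m) (\<lambda>(i,j). v i * cnj (v j)))"
  shows "cinner (n*m) (tensor_id_vec n m A v) (tensor_id_vec n m U (tensor_id_vec n m B v))
       = mtrace (\<sigma> * adj A * U * B)"
proof -
  have "cinner (n*m) (tensor_id_vec n m A v) (tensor_id_vec n m U (tensor_id_vec n m B v))
      = cinner (n*m) (tensor_id_vec n m A v) (tensor_id_vec n m (U * B) v)"
    using U B by (intro cinner_cong) (auto simp: tensor_id_vec_mult)
  also have "\<dots> = mtrace (\<sigma> * adj A * (U * B))"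
    using U A B by (intro cinner_tensor_id_vec_trace \<sigma>) auto
  also have "\<sigma> * adj A * (U * B) = \<sigma> * adj A * U * B"
  proof -
    have "\<sigma> * adj A \<in> carrier_mat n n" using A \<sigma> by (auto simp: ptrace_Z_def adj_def)
    then show ?thesis using U B by (simp add: assoc_mult_mat[of _ n n U n B n])
  qed
  finally show ?thesis .
qed

lemma kraus_channel_carrier: "kraus_channel n As \<Longrightarrow> t < length As \<Longrightarrow> As!t \<in> carrier_mat n n"
  by (auto simp: kraus_channel_def)

lemma kraus_channel_sum_cinner:
  assumes K: "kraus_channel n As"
  shows "(\<Sum>t<length As. cinner (n*m) (tensor_id_vec n m (As!t) v) (tensor_id_vec n m (As!t) v))
       = cinner (n*m) v v"
proof -
  let ?L = "length As"
  have "(\<Sum>t<?L. cinner (n*m) (tensor_id_vec n m (As!t) v) (tensor_id_vec n m (As!t) v))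
      = (\<Sum>t<?L. cinner (n*m) v (tensor_id_vec n m (adj (As!t) * As!t) v))"
  proof (intro sum.cong refl)
    fix t assume "t \<in> {..<?L}"
    then have A: "As!t \<in> carrier_mat n n" using K by (simp add: kraus_channel_carrier)
    then have aA: "adj (As!t) \<in> carrier_mat n n" by (auto simp: adj_def)
    show "cinner (n*m) (tensor_id_vec n m (As!t) v) (tensor_id_vec n m (As!t) v)
        = cinner (n*m) v (tensor_id_vec n m (adj (As!t) * As!t) v)"
      unfolding cinner_tensor_id_vec_adj[OF A]
      by (rule cinner_cong) (auto simp: tensor_id_vec_mult[OF aA A])
  qed
  also have "\<dots> = cinner (n*m) v (\<lambda>p. \<Sum>t<?L. tensor_id_vec n m (adj (As!t) * As!t) v p)"
    by (rule cinner_sum_right[symmetric])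
  also have "\<dots> = cinner (n*m) v v"
  proof (rule cinner_cong)
    fix p assume p: "p < n*m"
    then have i: "p div m < n" by (simp add: less_mult_imp_div_less)
    have "(\<Sum>t<?L. tensor_id_vec n m (adj (As!t) * As!t) v p)
        = tensor_id_vec n m (mat n n (\<lambda>(i,j). \<Sum>k<?L. (adj (As!k) * As!k) $$ (i,j))) v p"
      unfolding tensor_id_vec_def using i by (simp add: sum_distrib_right sum.swap[of _ "{..<?L}"])
    then show "(\<Sum>t<?L. tensor_id_vec n m (adj (As!t) * As!t) v p) = v p"
      using K p by (simp add: kraus_channel_def tensor_id_vec_one)
  qed simp
  finally show ?thesis .
qed

lemma kraus_purity_le_one:
  assumes K: "kraus_channel n As" and v: "(\<Sum>p<n*m. (cmod (v p))\<^sup>2) = 1"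
  shows "(\<Sum>t<length As. \<Sum>s<length As.
           (cmod (cinner (n*m) (tensor_id_vec n m (As!t) v) (tensor_id_vec n m (As!s) v)))\<^sup>2) \<le> 1"
proof -
  let ?W = "\<lambda>t. tensor_id_vec n m (As!t) v"
  have "(\<Sum>t<length As. \<Sum>s<length As. (cmod (cinner (n*m) (?W t) (?W s)))\<^sup>2)
      \<le> (\<Sum>t<length As. Re (cinner (n*m) (?W t) (?W t)))\<^sup>2"
    by (rule sum_cmod_cinner_sq_le)
  also have "(\<Sum>t<length As. Re (cinner (n*m) (?W t) (?W t))) = Re (cinner (n*m) v v)"
    using kraus_channel_sum_cinner[OF K, of m v] by (simp flip: Re_sum)
  also have "\<dots> = 1"
    using v by (simp add: Re_cinner_self)
  finally show ?thesis by simp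
qed

section \<open>Channels applied to a pure state\<close>

lemma mtrace_mult_rank_one_sums:
  assumes r: "\<rho> \<in> carrier_mat N N" and r': "\<rho>' \<in> carrier_mat N N"
    and e: "\<And>p q. p < N \<Longrightarrow> q < N \<Longrightarrow> \<rho> $$ (p,q) = (\<Sum>t<L. X t p * cnj (X t q))"
    and e': "\<And>p q. p < N \<Longrightarrow> q < N \<Longrightarrow> \<rho>' $$ (p,q) = (\<Sum>s<L'. Y s p * cnj (Y s q))"
  shows "mtrace (\<rho> * \<rho>') = (\<Sum>t<L. \<Sum>s<L'. complex_of_real ((cmod (cinner N (X t) (Y s)))\<^sup>2))"
proof -
  define F where "F p q t s = cnj (X t q) * Y s q * (X t p * cnj (Y s p))" for p q t s
  have "mtrace (\<rho> * \<rho>') = (\<Sum>p<N. \<Sum>q<N. \<Sum>t<L. \<Sum>s<L'. F p q t s)"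
    using e e' by (simp add: mtrace_mult[OF r r'] F_def sum_product mult_ac)
  also have "\<dots> = (\<Sum>t<L. \<Sum>p<N. \<Sum>q<N. \<Sum>s<L'. F p q t s)"
    by (subst sum.swap, rule sum.cong[OF refl], rule sum.swap)
  also have "\<dots> = (\<Sum>t<L. \<Sum>s<L'. \<Sum>q<N. \<Sum>p<N. F p q t s)"
    by (intro sum.cong[OF refl], subst sum.swap, subst (2) sum.swap, subst sum.swap) simp
  also have "\<dots> = (\<Sum>t<L. \<Sum>s<L'. cinner N (X t) (Y s) * cnj (cinner N (X t) (Y s)))"
    unfolding cinner_def F_def by (simp add: sum_product)
  also have "\<dots> = (\<Sum>t<L. \<Sum>s<L'. complex_of_real ((cmod (cinner N (X t) (Y s)))\<^sup>2))"
    by (simp only: complex_norm_square[symmetric])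
  finally show ?thesis .
qed

lemma index_conj_rank_one_sum:
  assumes M: "M \<in> carrier_mat n n" and K: "K \<in> carrier_mat n n"
    and Ke: "\<And>b c. b < n \<Longrightarrow> c < n \<Longrightarrow> K $$ (b,c) = (\<Sum>t\<in>T. f t b * cnj (g t c))"
    and i: "i < n" and j: "j < n"
  shows "(M * K * adj M) $$ (i,j) = (\<Sum>t\<in>T. (\<Sum>b<n. M $$ (i,b) * f t b) * cnj (\<Sum>c<n. M $$ (j,c) * g t c))"
proof -
  have aM: "adj M \<in> carrier_mat n n" using M by (auto simp: adj_def)
  have "(M * K * adj M) $$ (i,j) = (\<Sum>c<n. (M * K) $$ (i,c) * adj M $$ (c,j))"
    using M K aM i j by (subst index_mult_mat_sum[of _ n n _ n]) auto
  also have "\<dots> = (\<Sum>c<n. (\<Sum>b<n. M $$ (i,b) * K $$ (b,c)) * cnj (M $$ (j,c)))"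
    using M K i j by (intro sum.cong refl) (subst index_mult_mat_sum[of _ n n _ n], auto simp: adj_def)
  also have "\<dots> = (\<Sum>c<n. \<Sum>b<n. \<Sum>t\<in>T. M $$ (i,b) * f t b * (cnj (g t c) * cnj (M $$ (j,c))))"
    using Ke by (simp add: sum_distrib_left sum_distrib_right mult.assoc)
  also have "\<dots> = (\<Sum>t\<in>T. \<Sum>b<n. \<Sum>c<n. M $$ (i,b) * f t b * (cnj (g t c) * cnj (M $$ (j,c))))"
    by (subst (2) sum.swap, subst sum.swap, subst (2) sum.swap) (rule refl)
  also have "\<dots> = (\<Sum>t\<in>T. (\<Sum>b<n. M $$ (i,b) * f t b) * cnj (\<Sum>c<n. M $$ (j,c) * g t c))"
    by (simp add: sum_product mult.commute)
  finally show ?thesis .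
qed

lemma tensor_id_vec_index:
  "k < m \<Longrightarrow> tensor_id_vec n m M v (b*m + k) = (\<Sum>a<n. M $$ (b, a) * v (a*m + k))"
  by (simp add: tensor_id_vec_def)

lemma index_kraus_apply_rank_one:
  assumes K: "kraus_channel n As" and "k < m" "l < m" and ij: "i < n" "j < n"
  shows "kraus_apply As (mat n n (\<lambda>(i,j). v (i*m + k) * cnj (v (j*m + l)))) $$ (i,j)
     = (\<Sum>t<length As. tensor_id_vec n m (As!t) v (i*m + k) * cnj (tensor_id_vec n m (As!t) v (j*m + l)))"
proof -
  let ?B = "mat n n (\<lambda>(i,j). v (i*m + k) * cnj (v (j*m + l)))"
  have "kraus_apply As ?B $$ (i,j) = (\<Sum>t<length As. (As!t * ?B * adj (As!t)) $$ (i,j))"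
    using ij by (simp add: kraus_apply_def)
  also have "\<dots> = (\<Sum>t<length As. \<Sum>u\<in>{()}.
      (\<Sum>b<n. As!t $$ (i,b) * v (b*m + k)) * cnj (\<Sum>c<n. As!t $$ (j,c) * v (c*m + l)))"
    using K ij by (intro sum.cong refl index_conj_rank_one_sum) (auto simp: kraus_channel_carrier)
  also have "\<dots> = (\<Sum>t<length As. tensor_id_vec n m (As!t) v (i*m + k) * cnj (tensor_id_vec n m (As!t) v (j*m + l)))"
    using assms by (simp add: tensor_id_vec_index)
  finally show ?thesis .
qed

lemma index_tensor_id_pure:
  assumes p: "p < n*m" and q: "q < n*m"
  shows "tensor_id n m \<Phi> (mat (n*m) (n*m) (\<lambda>(i,j). v i * cnj (v j))) $$ (p,q)
     = \<Phi> (mat n n (\<lambda>(i,j). v (i*m + p mod m) * cnj (v (j*m + q mod m)))) $$ (p div m, q div m)"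
proof -
  have "0 < m" using p by (cases m) auto
  then have "mat n n (\<lambda>(i,j). mat (n*m) (n*m) (\<lambda>(i,j). v i * cnj (v j)) $$ (i*m + p mod m, j*m + q mod m))
      = mat n n (\<lambda>(i,j). v (i*m + p mod m) * cnj (v (j*m + q mod m)))"
    by (intro eq_matI) (auto simp: tensor_index_less)
  then show ?thesis using p q by (simp add: tensor_id_def)
qed

lemma index_tensor_id_kraus_pure:
  assumes K: "kraus_channel n As" and p: "p < n*m" and q: "q < n*m"
  shows "tensor_id n m (kraus_apply As) (mat (n*m) (n*m) (\<lambda>(i,j). v i * cnj (v j))) $$ (p,q)
     = (\<Sum>t<length As. tensor_id_vec n m (As!t) v p * cnj (tensor_id_vec n m (As!t) v q))"
proof -
  have m: "0 < m" using p by (cases m) auto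
  have ij: "p div m < n" "q div m < n" using p q by (simp_all add: less_mult_imp_div_less)
  have "tensor_id n m (kraus_apply As) (mat (n*m) (n*m) (\<lambda>(i,j). v i * cnj (v j))) $$ (p,q)
     = (\<Sum>t<length As. tensor_id_vec n m (As!t) v (p div m * m + p mod m)
                      * cnj (tensor_id_vec n m (As!t) v (q div m * m + q mod m)))"
    unfolding index_tensor_id_pure[OF p q] by (rule index_kraus_apply_rank_one[OF K _ _ ij]) (use m in auto)
  then show ?thesis by simp
qed

lemma index_tensor_id_conj_kraus_pure:
  assumes K: "kraus_channel n As" and U: "U \<in> carrier_mat n n" and p: "p < n*m" and q: "q < n*m"
  shows "tensor_id n m (\<lambda>\<rho>. U * kraus_apply As \<rho> * adj U) (mat (n*m) (n*m) (\<lambda>(i,j). v i * cnj (v j))) $$ (p,q)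
     = (\<Sum>t<length As. tensor_id_vec n m U (tensor_id_vec n m (As!t) v) p
                        * cnj (tensor_id_vec n m U (tensor_id_vec n m (As!t) v) q))"
proof -
  have m: "0 < m" using p by (cases m) auto
  have ij: "p div m < n" "q div m < n" using p q by (simp_all add: less_mult_imp_div_less)
  let ?B = "mat n n (\<lambda>(i,j). v (i*m + p mod m) * cnj (v (j*m + q mod m)))"
  have KB: "kraus_apply As ?B \<in> carrier_mat n n" by (simp add: kraus_apply_def)
  have "(U * kraus_apply As ?B * adj U) $$ (p div m, q div m)
      = (\<Sum>t<length As. (\<Sum>b<n. U $$ (p div m, b) * tensor_id_vec n m (As!t) v (b*m + p mod m))
          * cnj (\<Sum>c<n. U $$ (q div m, c) * tensor_id_vec n m (As!t) v (c*m + q mod m)))"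
    by (rule index_conj_rank_one_sum[OF U KB]) (use ij m in \<open>auto intro: index_kraus_apply_rank_one[OF K]\<close>)
  then show ?thesis
    unfolding index_tensor_id_pure[OF p q] by (simp add: tensor_id_vec_def)
qed

lemma superfidelity_purification:
  fixes v :: "nat \<Rightarrow> complex"
  assumes K: "kraus_channel n As" and U: "U \<in> carrier_mat n n" and UU: "adj U * U = 1\<^sub>m n"
    and v: "(\<Sum>p<n*m. (cmod (v p))\<^sup>2) = 1"
    and \<sigma>: "\<sigma> = ptrace_Z n m (mat (n*m) (n*m) (\<lambda>(i,j). v i * cnj (v j)))"
  defines "\<xi> \<equiv> mat (n*m) (n*m) (\<lambda>(i,j). v i * cnj (v j))"
  shows "superfidelity (tensor_id n m (kraus_apply As) \<xi>) (tensor_id n m (\<lambda>\<rho>. U * kraus_apply As \<rho> * adj U) \<xi>)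
    = 1 + (\<Sum>i<length As. \<Sum>j<length As. (cmod (mtrace (\<sigma> * adj (As!i) * U * As!j)))\<^sup>2)
        - (\<Sum>i<length As. \<Sum>j<length As. (cmod (mtrace (\<sigma> * adj (As!i) * As!j)))\<^sup>2)"
proof -
  define N where "N = n*m"
  define L where "L = length As"
  define W where "W t = tensor_id_vec n m (As!t) v" for t
  define W' where "W' t = tensor_id_vec n m U (W t)" for t
  let ?\<rho>1 = "tensor_id n m (kraus_apply As) \<xi>"
  let ?\<rho>2 = "tensor_id n m (\<lambda>\<rho>. U * kraus_apply As \<rho> * adj U) \<xi>"
  have A: "As!t \<in> carrier_mat n n" if "t < L" for t
    using K that by (simp add: L_def kraus_channel_carrier)
  have \<rho>: "?\<rho>1 \<in> carrier_mat N N" "?\<rho>2 \<in> carrier_mat N N" by (simp_all add: tensor_id_def N_def)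
  have e1: "?\<rho>1 $$ (p,q) = (\<Sum>t<L. W t p * cnj (W t q))" if "p < N" "q < N" for p q
    unfolding \<xi>_def W_def L_def using index_tensor_id_kraus_pure[OF K] that by (simp add: N_def)
  have e2: "?\<rho>2 $$ (p,q) = (\<Sum>t<L. W' t p * cnj (W' t q))" if "p < N" "q < N" for p q
    unfolding \<xi>_def W'_def W_def L_def using index_tensor_id_conj_kraus_pure[OF K U] that by (simp add: N_def)
  have WW: "cinner N (W t) (W s) = mtrace (\<sigma> * adj (As!t) * As!s)" if "t < L" "s < L" for t s
    unfolding W_def N_def using A that by (intro cinner_tensor_id_vec_trace \<sigma>) auto
  have WW': "cinner N (W t) (W' s) = mtrace (\<sigma> * adj (As!t) * U * As!s)" if "t < L" "s < L" for t s
    unfolding W'_def W_def N_def using A that U by (intro cinner_tensor_id_vec_conj_trace \<sigma>) auto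
  have W'W': "cinner N (W' t) (W' s) = cinner N (W t) (W s)" for t s
    unfolding W'_def N_def by (rule cinner_tensor_id_vec_unitary[OF U UU])
  have tr12: "Re (mtrace (?\<rho>1 * ?\<rho>2)) = (\<Sum>i<L. \<Sum>j<L. (cmod (mtrace (\<sigma> * adj (As!i) * U * As!j)))\<^sup>2)"
    by (simp add: mtrace_mult_rank_one_sums[OF \<rho> e1 e2] Re_sum WW')
  have tr11: "Re (mtrace (?\<rho>1 * ?\<rho>1)) = (\<Sum>t<L. \<Sum>s<L. (cmod (cinner N (W t) (W s)))\<^sup>2)"
    by (simp add: mtrace_mult_rank_one_sums[OF \<rho>(1) \<rho>(1) e1 e1] Re_sum)
  have tr22: "Re (mtrace (?\<rho>2 * ?\<rho>2)) = Re (mtrace (?\<rho>1 * ?\<rho>1))"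
    by (simp add: tr11 mtrace_mult_rank_one_sums[OF \<rho>(2) \<rho>(2) e2 e2] Re_sum W'W')
  have "Re (mtrace (?\<rho>1 * ?\<rho>1)) \<le> 1"
    unfolding tr11 W_def N_def L_def by (rule kraus_purity_le_one[OF K v])
  then have "superfidelity ?\<rho>1 ?\<rho>2 = Re (mtrace (?\<rho>1 * ?\<rho>2)) + (1 - Re (mtrace (?\<rho>1 * ?\<rho>1)))"
    unfolding superfidelity_def tr22 by (simp flip: real_sqrt_mult)
  then show ?thesis
    unfolding tr12 tr11 L_def by (simp add: WW[unfolded L_def])
qed

lemma superfidelity_pure_state:
  assumes K: "kraus_channel n As" and U: "U \<in> carrier_mat n n" and UU: "adj U * U = 1\<^sub>m n"
    and pure: "pure_state (n*m) \<xi>" and reduced: "ptrace_Z n m \<xi> = \<sigma>"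
  shows "superfidelity (tensor_id n m (kraus_apply As) \<xi>) (tensor_id n m (\<lambda>\<rho>. U * kraus_apply As \<rho> * adj U) \<xi>)
    = 1 + (\<Sum>i<length As. \<Sum>j<length As. (cmod (mtrace (\<sigma> * adj (As!i) * U * As!j)))\<^sup>2)
        - (\<Sum>i<length As. \<Sum>j<length As. (cmod (mtrace (\<sigma> * adj (As!i) * As!j)))\<^sup>2)"
proof -
  obtain v where v: "(\<Sum>p<n*m. (cmod (v $ p))\<^sup>2) = 1"
    and \<xi>: "\<xi> = mat (n*m) (n*m) (\<lambda>(i,j). v $ i * cnj (v $ j))"
    using pure unfolding pure_state_def by blast
  show ?thesis
    unfolding \<xi> by (rule superfidelity_purification[OF K U UU v]) (use reduced \<xi> in simp)
qed

section \<open>Existence of purifications\<close>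

definition quad_form :: "nat \<Rightarrow> (nat \<Rightarrow> nat \<Rightarrow> complex) \<Rightarrow> (nat \<Rightarrow> complex) \<Rightarrow> complex" where
  "quad_form n S x = (\<Sum>i<n. \<Sum>j<n. cnj (x i) * S i j * x j)"

lemma quad_form_Suc:
  "quad_form (Suc n) S y = quad_form n S y + (\<Sum>j<n. cnj (y n) * S n j * y j)
     + (\<Sum>i<n. cnj (y i) * S i n * y n) + cnj (y n) * S n n * y n"
  unfolding quad_form_def by (simp add: sum.distrib add_ac)

lemma quad_form_cong: "(\<And>i. i < n \<Longrightarrow> x i = x' i) \<Longrightarrow> quad_form n S x = quad_form n S x'"
  unfolding quad_form_def by auto

lemma quad_form_two_point:
  fixes i n :: nat
  assumes i: "i < n"
  shows "quad_form (Suc n) S (\<lambda>k. if k = i then \<alpha> else if k = n then \<beta> else 0)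
   = cnj \<alpha> * S i i * \<alpha> + cnj \<alpha> * S i n * \<beta> + cnj \<beta> * S n i * \<alpha> + cnj \<beta> * S n n * \<beta>"
proof -
  let ?y = "\<lambda>k. if k = i then \<alpha> else if k = n then \<beta> else 0"
  have "quad_form n S ?y = quad_form n S (\<lambda>k. if k = i then \<alpha> else 0)"
    by (rule quad_form_cong) auto
  also have "\<dots> = cnj \<alpha> * S i i * \<alpha>"
    using i by (simp add: quad_form_def if_distrib[where f = cnj] if_distrib[where f = "\<lambda>x. _ * x"]
        if_distrib[where f = "\<lambda>x. x * _"] cong: if_cong)
  finally show ?thesis
    unfolding quad_form_Suc using i
    by (simp add: if_distrib[where f = cnj] if_distrib[where f = "\<lambda>x. _ * x"]
        if_distrib[where f = "\<lambda>x. x * _"] add_ac cong: if_cong)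
qed

lemma quad_form_add_rank_one:
  "quad_form N (\<lambda>i j. S i j + w i * cnj (w j)) y
   = quad_form N S y + (\<Sum>i<N. cnj (y i) * w i) * (\<Sum>j<N. cnj (w j) * y j)"
  unfolding quad_form_def
  by (simp add: distrib_left distrib_right sum.distrib sum_product mult_ac)

text \<open>If the last diagonal entry vanishes, testing the form on e_i + t e_n with t a large multiple
  of -S(n,i) makes it negative unless S(i,n) = 0.\<close>

lemma psd_zero_diagonal_column:
  assumes herm: "\<forall>i<Suc n. \<forall>j<Suc n. cnj (S j i) = S i j"
    and pos: "\<forall>x. 0 \<le> Re (quad_form (Suc n) S x)"
    and Snn: "S n n = 0" and i: "i < n"
  shows "S i n = 0"
proof (rule ccontr)
  define c where "c = S i n"
  assume "S i n \<noteq> 0"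
  then have c0: "c \<noteq> 0" by (simp add: c_def)
  define R where "R = (\<bar>Re (S i i)\<bar> + 1) / (2 * (cmod c)\<^sup>2)"
  define t where "t = - (complex_of_real R * cnj c)"
  let ?y = "\<lambda>k. if k = i then 1 else if k = n then t else 0"
  have Sni: "S n i = cnj c" using herm i unfolding c_def by (metis less_SucI lessI)
  have "quad_form (Suc n) S ?y = S i i + c * t + cnj t * cnj c"
    unfolding quad_form_two_point[OF i] Sni using Snn by (simp add: c_def)
  also have "\<dots> = S i i - 2 * complex_of_real R * (c * cnj c)"
    unfolding t_def by (simp add: algebra_simps)
  also have "c * cnj c = complex_of_real ((cmod c)\<^sup>2)" by (rule complex_norm_square[symmetric])
  finally have "Re (quad_form (Suc n) S ?y) = Re (S i i) - 2 * R * (cmod c)\<^sup>2" by simp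
  also have "2 * R * (cmod c)\<^sup>2 = \<bar>Re (S i i)\<bar> + 1" using c0 unfolding R_def by simp
  finally have "Re (quad_form (Suc n) S ?y) < 0" by linarith
  then show False using pos by (meson not_le)
qed

lemma psd_last_column_factor:
  assumes herm: "\<forall>i<Suc n. \<forall>j<Suc n. cnj (S j i) = S i j"
    and pos: "\<forall>x. 0 \<le> Re (quad_form (Suc n) S x)"
  obtains w where "\<And>i. i \<le> n \<Longrightarrow> S i n = w i * cnj (w n)" and "w n = 0 \<Longrightarrow> w = (\<lambda>_. 0)"
proof -
  define a where "a = Re (S n n)"
  have "cnj (S n n) = S n n" using herm by simp
  from arg_cong[OF this, of Im] have "Im (S n n) = 0" by simp
  then have Snn: "S n n = complex_of_real a" unfolding a_def by (simp add: complex_eq_iff)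
  let ?e = "\<lambda>k. if k = n then 1 else 0"
  have "quad_form (Suc n) S ?e = S n n"
    unfolding quad_form_Suc by (simp add: quad_form_def)
  then have a: "0 \<le> a" using pos[rule_format, of ?e] unfolding a_def by simp
  show ?thesis
  proof (cases "a = 0")
    case True
    have zero: "S i n = 0" if "i \<le> n" for i
      using psd_zero_diagonal_column[OF herm pos, of i] Snn True that by (cases "i = n") auto
    show ?thesis by (rule that[of "\<lambda>_. 0"]) (simp_all add: zero)
  next
    case False
    define w where "w i = S i n / complex_of_real (sqrt a)" for i
    have sa: "sqrt a \<noteq> 0" using False a by simp
    have wn: "w n = complex_of_real (sqrt a)"
      using sa a by (simp add: w_def Snn field_simps flip: of_real_mult)
    show ?thesis
      by (rule that[of w]) (use sa wn in \<open>simp_all add: w_def\<close>)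
  qed
qed

text \<open>Subtracting the rank-one part w w^* keeps the leading n x n block positive: any x can be
  extended by a last coordinate that makes it orthogonal to w.\<close>

lemma psd_deflate:
  assumes herm: "\<forall>i<Suc n. \<forall>j<Suc n. cnj (S j i) = S i j"
    and pos: "\<forall>x. 0 \<le> Re (quad_form (Suc n) S x)"
    and col: "\<And>i. i \<le> n \<Longrightarrow> S i n = w i * cnj (w n)" and w0: "w n = 0 \<Longrightarrow> w = (\<lambda>_. 0)"
  shows "0 \<le> Re (quad_form n (\<lambda>i j. S i j - w i * cnj (w j)) x)"
proof -
  define S' where "S' i j = S i j - w i * cnj (w j)" for i j
  have row: "S n j = w n * cnj (w j)" if "j \<le> n" for j
  proof -
    have "S n j = cnj (S j n)" using herm that by simp
    then show ?thesis using col[OF that] by (simp add: mult.commute)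
  qed
  define y where "y = x(n := - (\<Sum>j<n. cnj (w j) * x j) / cnj (w n))"
  have orth: "(\<Sum>j<Suc n. cnj (w j) * y j) = 0"
  proof (cases "w n = 0")
    case True
    then show ?thesis using w0 by simp
  next
    case False
    then have "cnj (w n) \<noteq> 0" by simp
    then show ?thesis by (simp add: y_def)
  qed
  have "quad_form (Suc n) S y = quad_form (Suc n) S' y"
    using quad_form_add_rank_one[of "Suc n" S' w y] orth by (simp add: S'_def)
  also have "\<dots> = quad_form n S' x"
  proof -
    have "S' n j = 0" "S' j n = 0" if "j \<le> n" for j using row[OF that] col[OF that] by (simp_all add: S'_def)
    moreover have "quad_form n S' y = quad_form n S' x" by (rule quad_form_cong) (simp add: y_def)
    ultimately show ?thesis unfolding quad_form_Suc by simp
  qed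
  finally show ?thesis using pos unfolding S'_def by metis
qed

lemma psd_factorization:
  "(\<forall>i<n. \<forall>j<n. cnj (S j i) = S i j) \<Longrightarrow> (\<forall>x. 0 \<le> Re (quad_form n S x))
    \<Longrightarrow> \<exists>V. \<forall>i<n. \<forall>j<n. S i j = (\<Sum>k<n. V i k * cnj (V j k))"
proof (induction n arbitrary: S)
  case (Suc n)
  obtain w where col: "\<And>i. i \<le> n \<Longrightarrow> S i n = w i * cnj (w n)" and w0: "w n = 0 \<Longrightarrow> w = (\<lambda>_. 0)"
    using psd_last_column_factor[OF Suc.prems] by blast
  have row: "S n j = w n * cnj (w j)" if "j \<le> n" for j
  proof -
    have "S n j = cnj (S j n)" using Suc.prems(1) that by simp
    then show ?thesis using col[OF that] by (simp add: mult.commute)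
  qed
  define S' where "S' i j = S i j - w i * cnj (w j)" for i j
  have "\<forall>i<n. \<forall>j<n. cnj (S' j i) = S' i j"
    using Suc.prems(1) by (auto simp: S'_def mult.commute)
  moreover have "\<forall>x. 0 \<le> Re (quad_form n S' x)"
    unfolding S'_def using psd_deflate[OF Suc.prems col w0] by blast
  ultimately obtain V' where V': "\<forall>i<n. \<forall>j<n. S' i j = (\<Sum>k<n. V' i k * cnj (V' j k))"
    using Suc.IH by blast
  define V where "V i k = (if k = n then w i else if i < n then V' i k else 0)" for i k
  have "S i j = (\<Sum>k<Suc n. V i k * cnj (V j k))" if i: "i < Suc n" and j: "j < Suc n" for i j
  proof -
    have "(\<Sum>k<Suc n. V i k * cnj (V j k)) = (\<Sum>k<n. V i k * cnj (V j k)) + w i * cnj (w j)"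
      by (simp add: V_def)
    also have "\<dots> = S i j"
    proof (cases "i < n \<and> j < n")
      case True
      then have "(\<Sum>k<n. V i k * cnj (V j k)) = S' i j"
        using V' by (auto simp: V_def intro!: sum.cong)
      then show ?thesis by (simp add: S'_def)
    next
      case False
      then have "i = n \<or> j = n" using i j by auto
      moreover have "(\<Sum>k<n. V i k * cnj (V j k)) = 0"
        using False by (intro sum.neutral) (auto simp: V_def)
      ultimately show ?thesis using col row i j by auto
    qed
    finally show ?thesis by simp
  qed
  then show ?case by blast
qed simp

lemma density_dim_pos: "density n \<sigma> \<Longrightarrow> 0 < n"
  by (rule ccontr) (auto simp: density_def psd_def hermitian_def mtrace_def)

text \<open>A factorisation \<sigma> = V V^* gives the purification with coefficients v(i*n+k) = V(i,k).\<close>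

lemma purification_exists:
  assumes "density n \<sigma>"
  shows "\<exists>\<xi>. pure_state (n*n) \<xi> \<and> ptrace_Z n n \<xi> = \<sigma>"
proof -
  have "psd n \<sigma>" and tr: "mtrace \<sigma> = 1" using assms by (simp_all add: density_def)
  then have "hermitian n \<sigma>"
    and pos: "\<forall>v. v \<in> carrier_vec n \<longrightarrow> 0 \<le> Re (\<Sum>i<n. \<Sum>j<n. cnj (v $ i) * \<sigma> $$ (i,j) * v $ j)"
    unfolding psd_def by blast+
  then have s: "\<sigma> \<in> carrier_mat n n" and h: "adj \<sigma> = \<sigma>" by (simp_all add: hermitian_def)
  have "cnj (\<sigma> $$ (j,i)) = \<sigma> $$ (i,j)" if "i < n" "j < n" for i j
    using arg_cong[OF h, of "\<lambda>M. M $$ (i,j)"] s that by (simp add: adj_def)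
  then have herm: "\<forall>i<n. \<forall>j<n. cnj (\<sigma> $$ (j,i)) = \<sigma> $$ (i,j)" by blast
  have "0 \<le> Re (quad_form n (\<lambda>i j. \<sigma> $$ (i,j)) x)" for x
  proof -
    have "quad_form n (\<lambda>i j. \<sigma> $$ (i,j)) x = (\<Sum>i<n. \<Sum>j<n. cnj (vec n x $ i) * \<sigma> $$ (i,j) * vec n x $ j)"
      unfolding quad_form_def by (intro sum.cong refl) simp
    then show ?thesis using pos[rule_format, OF vec_carrier] by (simp only:)
  qed
  then obtain V where V: "\<forall>i<n. \<forall>j<n. \<sigma> $$ (i,j) = (\<Sum>k<n. V i k * cnj (V j k))"
    using psd_factorization[OF herm] by blast
  define v where "v = vec (n*n) (\<lambda>p. V (p div n) (p mod n))"
  have vi: "v $ (i*n + k) = V i k" if "i < n" "k < n" for i k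
    using that by (simp add: v_def tensor_index_less)
  have "(\<Sum>p<n*n. (cmod (v $ p))\<^sup>2) = (\<Sum>i<n. \<Sum>k<n. (cmod (V i k))\<^sup>2)"
    by (subst sum_lessThan_mult) (simp add: vi)
  also have "\<dots> = (\<Sum>i<n. Re (\<sigma> $$ (i,i)))"
  proof (intro sum.cong refl)
    fix i assume "i \<in> {..<n}"
    then have "\<sigma> $$ (i,i) = (\<Sum>k<n. V i k * cnj (V i k))" using V by simp
    also have "\<dots> = (\<Sum>k<n. complex_of_real ((cmod (V i k))\<^sup>2))"
      by (simp only: complex_norm_square)
    finally have "\<sigma> $$ (i,i) = (\<Sum>k<n. complex_of_real ((cmod (V i k))\<^sup>2))" .
    then show "(\<Sum>k<n. (cmod (V i k))\<^sup>2) = Re (\<sigma> $$ (i,i))" by (simp add: Re_sum)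
  qed
  also have "\<dots> = Re (mtrace \<sigma>)"
    using s by (simp add: mtrace_def Re_sum)
  finally have "pure_state (n*n) (mat (n*n) (n*n) (\<lambda>(i,j). v $ i * cnj (v $ j)))"
    unfolding pure_state_def using tr by (intro exI[of _ v]) (simp add: v_def)
  moreover have "ptrace_Z n n (mat (n*n) (n*n) (\<lambda>(i,j). v $ i * cnj (v $ j))) = \<sigma>"
    using s V by (intro eq_matI) (auto simp: ptrace_Z_def tensor_index_less vi)
  ultimately show ?thesis by blast
qed

lemma cInf_const_family:
  fixes f :: "'a \<Rightarrow> 'b \<Rightarrow> 'c :: conditionally_complete_lattice"
  assumes "\<And>x y. P x y \<Longrightarrow> f x y = c" and "P x0 y0"
  shows "Inf {f x y | x y. P x y} = c"
proof -
  have "{f x y | x y. P x y} = {c}" using assms by blast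
  then show ?thesis by simp
qed

theorem mainTheorem6:
  fixes n :: nat and \<sigma> H :: "complex mat" and As :: "complex mat list" and \<epsilon> :: real
  assumes "density n \<sigma>"
    and "kraus_channel n As"
    and "hermitian n H"
  defines "U \<equiv> mat_exp ((- (\<i> * complex_of_real \<epsilon>)) \<cdot>\<^sub>m H)"
  shows "channel_superfidelity n (kraus_apply As) (\<lambda>\<rho>. U * kraus_apply As \<rho> * adj U) \<sigma>
    = 1 + (\<Sum>i<length As. \<Sum>j<length As. (cmod (mtrace (\<sigma> * adj (As!i) * U * As!j)))\<^sup>2)
        - (\<Sum>i<length As. \<Sum>j<length As. (cmod (mtrace (\<sigma> * adj (As!i) * As!j)))\<^sup>2)"
proof -
  have U: "U \<in> carrier_mat n n"
    using assms(3) unfolding U_def hermitian_def by (simp add: mat_exp_smult_carrier)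
  have UU: "adj U * U = 1\<^sub>m n"
    unfolding U_def by (rule unitary_mat_exp_smult[OF assms(3)]) simp
  obtain \<xi> where \<xi>: "pure_state (n*n) \<xi>" "ptrace_Z n n \<xi> = \<sigma>"
    using purification_exists[OF assms(1)] by blast
  show ?thesis
    unfolding channel_superfidelity_def
  proof (rule cInf_const_family)
    show "0 < n \<and> pure_state (n*n) \<xi> \<and> ptrace_Z n n \<xi> = \<sigma>"
      using \<xi> density_dim_pos[OF assms(1)] by simp
  qed (auto intro: superfidelity_pure_state[OF assms(2) U UU])
qed

end
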